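(* Let $n=p^k$, where $p$ is a prime and $k\ge2$, and let $G=\langle p^{k-1}+1\rangle$ be the subgroup of $\mathbb{Z}_n^\times$ generated by $p^{k-1}+1$. Then the coset index function $f_G$ is a $(p^k,\ 2p^{k-1}-p^{k-2},\ \{0,p^k-p^{k-1}\})$ zero-difference function.
   Context: For a subgroup $G$ of $\mathbb{Z}_n^\times$ and $r\in\mathbb{Z}_n$, the coset $rG=\{rg\mid g\in G\}$; these cosets partition $\mathbb{Z}_n$, forming a set $D_G$. The coset index function induced by $G$ is $f_G:\mathbb{Z}_n\to\mathbb{Z}_{|D_G|}$, $f_G(x)=h_G(C_x)$, where $C_x$ is the coset containing $x$ and $h_G:D_G\to\mathbb{Z}_{|D_G|}$ is a fixed bijection. A function $f:A\to B$ between finite abelian groups is an $(n,m,S)$ zero-difference function if $n=|A|$, $m=|f(A)|$, and for every nonzero $a\in A$, $|\{x\in A\mid f(x+a)=f(x)\}|\in S$. Here $A=(\mathbb{Z}_n,+)$. *)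

theory Defs
  imports "HOL-Computational_Algebra.Primes"
begin

text \<open>Z_n is modelled as the carrier {0..<n} of naturals with arithmetic mod n.\<close>

definition gen_subgroup :: "nat \<Rightarrow> nat \<Rightarrow> nat set" where
  "gen_subgroup n g = {g ^ i mod n | i. True}"

definition coset_mult :: "nat \<Rightarrow> nat set \<Rightarrow> nat \<Rightarrow> nat set" where
  "coset_mult n G r = (\<lambda>x. (r * x) mod n) ` G"

definition cosets_D :: "nat \<Rightarrow> nat set \<Rightarrow> nat set set" where
  "cosets_D n G = coset_mult n G ` {0..<n}"

definition coset_containing :: "nat \<Rightarrow> nat set \<Rightarrow> nat \<Rightarrow> nat set" where
  "coset_containing n G x = (THE C. C \<in> cosets_D n G \<and> x \<in> C)"

definition coset_index_fun :: "nat \<Rightarrow> nat set \<Rightarrow> (nat set \<Rightarrow> nat) \<Rightarrow> nat \<Rightarrow> nat" where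
  "coset_index_fun n G h x = h (coset_containing n G x)"

definition zero_difference_fun :: "nat \<Rightarrow> (nat \<Rightarrow> 'b) \<Rightarrow> nat \<Rightarrow> nat set \<Rightarrow> bool" where
  "zero_difference_fun n f m S \<longleftrightarrow>
     card {0..<n} = n \<and> m = card (f ` {0..<n}) \<and>
     (\<forall>a \<in> {0..<n}. a \<noteq> 0 \<longrightarrow>
        card {x \<in> {0..<n}. f ((x + a) mod n) = f x} \<in> S)"

end

(*
  Put q = p^(k-1), so that n = p q divides q^2. Since (1 + q)^i = 1 + i q modulo q^2, the
  group G consists of the residues 1 + i q. Consequently every multiple x of p is fixed by G,
  while for x prime to p the coset x G = {x + x i q} is the full residue class of x modulo q,
  as x is invertible modulo p. The cosets are thus the q singletons of multiples of p and the
  q - q/p classes modulo q of units; and a nonzero shift a keeps x in its coset iff x is a unit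
  and q divides a, which happens either for all n - q units or for none.
*)

theory Submission imports Defs "HOL-Number_Theory.Cong" begin

lemma card_multiples_below:
  fixes c m :: nat
  assumes "0 < c"
  shows "card {x \<in> {0..<c * m}. c dvd x} = m"
proof -
  have "{x \<in> {0..<c * m}. c dvd x} = (\<lambda>y. c * y) ` {0..<m}"
    using assms by auto
  moreover have "inj_on (\<lambda>y. c * y) {0..<m}"
    using assms by (simp add: inj_on_def)
  ultimately show ?thesis
    by (simp add: card_image)
qed

lemma card_nonmultiples_below:
  fixes c m :: nat
  assumes "0 < c"
  shows "card {x \<in> {0..<c * m}. \<not> c dvd x} = c * m - m"
proof -
  have "{x \<in> {0..<c * m}. \<not> c dvd x} = {0..<c * m} - {x \<in> {0..<c * m}. c dvd x}"
    by blast
  also have "card \<dots> = c * m - m"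
    using card_multiples_below[OF assms, of m] by (subst card_Diff_subset) auto
  finally show ?thesis .
qed

locale coset_fibres =
  fixes n :: nat and G :: "nat set" and r :: "nat \<Rightarrow> 'a"
  assumes coset_mult_eq_fibre: "x < n \<Longrightarrow> coset_mult n G x = {y \<in> {0..<n}. r y = r x}"
begin

lemma coset_containing_eq:
  assumes "x < n"
  shows "coset_containing n G x = coset_mult n G x"
  unfolding coset_containing_def
proof (rule the_equality)
  show "coset_mult n G x \<in> cosets_D n G \<and> x \<in> coset_mult n G x"
    using assms by (simp add: cosets_D_def coset_mult_eq_fibre)
next
  fix C assume "C \<in> cosets_D n G \<and> x \<in> C"
  then obtain z where "z < n" "C = coset_mult n G z" "x \<in> coset_mult n G z"
    unfolding cosets_D_def by auto
  then show "C = coset_mult n G x"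
    using assms by (simp add: coset_mult_eq_fibre)
qed

lemma card_cosets_D: "card (cosets_D n G) = card (r ` {0..<n})"
proof -
  let ?fibre = "\<lambda>v. {y \<in> {0..<n}. r y = v}"
  have "cosets_D n G = ?fibre ` r ` {0..<n}"
    unfolding cosets_D_def image_image by (intro image_cong) (auto simp: coset_mult_eq_fibre)
  moreover have "inj_on ?fibre (r ` {0..<n})"
    by (rule inj_onI) blast
  ultimately show ?thesis
    by (simp add: card_image)
qed

context
  fixes h :: "nat set \<Rightarrow> nat"
  assumes h_bij: "bij_betw h (cosets_D n G) {0..<card (cosets_D n G)}"
begin

lemma coset_index_fun_eq_iff:
  assumes "x < n" "y < n"
  shows "coset_index_fun n G h y = coset_index_fun n G h x \<longleftrightarrow> r y = r x"
proof -
  have "coset_mult n G z \<in> cosets_D n G" if "z < n" for z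
    using that by (simp add: cosets_D_def)
  then have "coset_index_fun n G h y = coset_index_fun n G h x \<longleftrightarrow>
      coset_mult n G y = coset_mult n G x"
    using assms inj_on_eq_iff[OF bij_betw_imp_inj_on[OF h_bij]]
    by (simp add: coset_index_fun_def coset_containing_eq)
  also have "\<dots> \<longleftrightarrow> r y = r x"
    using assms by (auto simp: coset_mult_eq_fibre)
  finally show ?thesis .
qed

lemma card_image_coset_index_fun:
  "card (coset_index_fun n G h ` {0..<n}) = card (r ` {0..<n})"
proof -
  have "coset_index_fun n G h ` {0..<n} = h ` cosets_D n G"
    by (auto simp: coset_index_fun_def coset_containing_eq cosets_D_def)
  then show ?thesis
    using bij_betw_imp_inj_on[OF h_bij] by (simp add: card_image card_cosets_D)
qed

end

end

lemma one_plus_power_cong: "[(1 + q) ^ i = 1 + i * q] (mod q\<^sup>2)" for q i :: nat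
proof (induction i)
  case (Suc i)
  have "[(1 + q) ^ i * (1 + q) = (1 + i * q) * (1 + q)] (mod q\<^sup>2)"
    by (rule cong_mult[OF Suc cong_refl])
  then have "[(1 + q) ^ Suc i = (1 + i * q) * (1 + q)] (mod q\<^sup>2)"
    by (simp only: power_Suc2)
  also have "(1 + i * q) * (1 + q) = (1 + Suc i * q) + i * q\<^sup>2"
    by (simp add: algebra_simps power2_eq_square)
  also have "[\<dots> = 1 + Suc i * q] (mod q\<^sup>2)"
    by (simp add: cong_def)
  finally show ?case .
qed simp

lemma gen_subgroup_one_plus:
  fixes n q :: nat
  assumes "n dvd q\<^sup>2"
  shows "gen_subgroup n (q + 1) = range (\<lambda>i. (1 + i * q) mod n)"
proof -
  have "(q + 1) ^ i mod n = (1 + i * q) mod n" for i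
    using cong_dvd_modulus_nat[OF one_plus_power_cong assms] by (simp add: cong_def add.commute)
  then show ?thesis
    unfolding gen_subgroup_def by auto
qed

lemma coset_mult_gen_subgroup_one_plus:
  fixes n q :: nat
  assumes "n dvd q\<^sup>2"
  shows "coset_mult n (gen_subgroup n (q + 1)) x = range (\<lambda>i. x * (1 + i * q) mod n)"
  unfolding coset_mult_def gen_subgroup_one_plus[OF assms] image_image
  by (simp add: mod_mult_right_eq)

definition coset_rep :: "nat \<Rightarrow> nat \<Rightarrow> nat \<Rightarrow> nat" where
  "coset_rep p q x = (if p dvd x then x else x mod q)"

lemma coset_rep_eq_iff:
  fixes p q x y :: nat
  assumes "p dvd q"
  shows "coset_rep p q y = coset_rep p q x \<longleftrightarrow> (if p dvd x then y = x else [y = x] (mod q))"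
  using assms dvd_mod_iff[OF assms] cong_dvd_iff[OF cong_dvd_modulus_nat[OF _ assms], of y x]
  by (auto simp: coset_rep_def cong_def)

context
  fixes p q :: nat
  assumes prime_p: "prime p" and p_dvd_q: "p dvd q"
begin

lemma pq_dvd_q_squared: "p * q dvd q\<^sup>2"
  using p_dvd_q by (simp add: power2_eq_square)

lemma coset_of_multiple:
  assumes "p dvd x" "x < p * q"
  shows "coset_mult (p * q) (gen_subgroup (p * q) (q + 1)) x = {x}"
proof -
  obtain c where c: "x = p * c"
    using assms(1) by blast
  have "x * (1 + i * q) mod (p * q) = x" for i
  proof -
    have "x * (1 + i * q) = x + (c * i) * (p * q)"
      using c by (simp add: algebra_simps)
    then show ?thesis
      using assms(2) by (metis mod_mult_self1 mod_less)
  qed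
  then show ?thesis
    unfolding coset_mult_gen_subgroup_one_plus[OF pq_dvd_q_squared] by auto
qed

lemma exists_one_plus_multiple_cong:
  assumes "\<not> p dvd x" "x < p * q" "[y = x] (mod q)"
  obtains i where "[x * (1 + i * q) = y] (mod p * q)"
proof -
  \<comment> \<open>the shift by \<open>p * q\<close> avoids truncated subtraction: \<open>y + p * q \<ge> x\<close>\<close>
  have "[y + p * q = x] (mod q)"
    using assms(3) by (simp add: cong_def)
  then obtain t where t: "y + p * q = t * q + x"
    using assms(2) cong_le_nat[of x "y + p * q" q] by auto
  have "coprime x p"
    using prime_p assms(1) by (simp add: prime_imp_coprime coprime_commute)
  then obtain i where i: "[x * i = t] (mod p)"
    using cong_solve_dvd_nat[of x p t] by auto
  have "[x * i * q = t * q] (mod p * q)"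
    using i by (simp add: cong_def mod_mult_mult2)
  then have "[x + x * i * q = t * q + x] (mod p * q)"
    by (metis add.commute cong_add_lcancel_nat)
  then have "[x * (1 + i * q) = y + p * q] (mod p * q)"
    by (simp add: t algebra_simps)
  then show ?thesis
    by (intro that) (simp add: cong_def)
qed

lemma coset_of_nonmultiple:
  assumes "\<not> p dvd x" "x < p * q"
  shows "coset_mult (p * q) (gen_subgroup (p * q) (q + 1)) x = {y \<in> {0..<p * q}. [y = x] (mod q)}"
proof -
  have "[x * (1 + i * q) mod (p * q) = x] (mod q)" for i
  proof -
    have "x * (1 + i * q) = x + (x * i) * q"
      by (simp add: algebra_simps)
    then have "[x * (1 + i * q) = x] (mod q)"
      unfolding cong_def by (simp only: mod_mult_self1)
    then show ?thesis
      by (simp add: cong_def mod_mod_cancel)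
  qed
  moreover have "y \<in> range (\<lambda>i. x * (1 + i * q) mod (p * q))"
    if y_less: "y < p * q" and y_cong: "[y = x] (mod q)" for y
  proof -
    obtain i where "[x * (1 + i * q) = y] (mod p * q)"
      using exists_one_plus_multiple_cong[OF assms y_cong] .
    then have "x * (1 + i * q) mod (p * q) = y"
      using y_less by (simp add: cong_def)
    then show ?thesis
      by blast
  qed
  moreover have "0 < p * q"
    using assms by (cases "p * q") auto
  ultimately show ?thesis
    unfolding coset_mult_gen_subgroup_one_plus[OF pq_dvd_q_squared] by auto
qed

lemma coset_mult_eq_fibre_coset_rep:
  assumes "x < p * q"
  shows "coset_mult (p * q) (gen_subgroup (p * q) (q + 1)) x =
    {y \<in> {0..<p * q}. coset_rep p q y = coset_rep p q x}"
  using assms coset_of_multiple coset_of_nonmultiple by (auto simp: coset_rep_eq_iff[OF p_dvd_q])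

interpretation coset_fibres "p * q" "gen_subgroup (p * q) (q + 1)" "coset_rep p q"
  by unfold_locales (rule coset_mult_eq_fibre_coset_rep)

lemma image_coset_rep:
  "coset_rep p q ` {0..<p * q} = {x \<in> {0..<p * q}. p dvd x} \<union> {x \<in> {0..<q}. \<not> p dvd x}"
proof (intro equalityI subsetI)
  fix v assume "v \<in> coset_rep p q ` {0..<p * q}"
  then obtain x where x: "x < p * q" "v = coset_rep p q x"
    by auto
  then have "0 < q"
    by (cases q) auto
  then show "v \<in> {x \<in> {0..<p * q}. p dvd x} \<union> {x \<in> {0..<q}. \<not> p dvd x}"
    using x dvd_mod_iff[OF p_dvd_q, of x] by (auto simp: coset_rep_def)
next
  fix v assume "v \<in> {x \<in> {0..<p * q}. p dvd x} \<union> {x \<in> {0..<q}. \<not> p dvd x}"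
  moreover have q_le: "q \<le> p * q"
    using prime_gt_0_nat[OF prime_p] by simp
  ultimately have "v < p * q" "coset_rep p q v = v"
    by (auto simp: coset_rep_def intro: less_le_trans[OF _ q_le])
  then show "v \<in> coset_rep p q ` {0..<p * q}"
    by (metis atLeastLessThan_iff image_eqI zero_le)
qed

lemma card_image_coset_rep: "card (coset_rep p q ` {0..<p * q}) = q + (q - q div p)"
proof -
  have p_pos: "0 < p"
    using prime_gt_0_nat[OF prime_p] .
  have "card {x \<in> {0..<q}. \<not> p dvd x} = q - q div p"
    using card_nonmultiples_below[OF p_pos, of "q div p"] p_dvd_q by simp
  moreover have "card {x \<in> {0..<p * q}. p dvd x} = q"
    using card_multiples_below[OF p_pos] .
  ultimately show ?thesis
    unfolding image_coset_rep by (subst card_Un_disjoint) auto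
qed

lemma coset_rep_shift_eq_iff:
  assumes "x < p * q" "0 < a" "a < p * q"
  shows "coset_rep p q ((x + a) mod (p * q)) = coset_rep p q x \<longleftrightarrow> \<not> p dvd x \<and> q dvd a"
proof (cases "p dvd x")
  case True
  have "(x + a) mod (p * q) \<noteq> x"
  proof
    assume "(x + a) mod (p * q) = x"
    then have "[x + a = x] (mod p * q)"
      using assms(1) by (simp add: cong_def)
    then have "p * q dvd a"
      by (simp add: cong_add_lcancel_0_nat cong_0_iff)
    then show False
      using assms(2,3) by (simp add: nat_dvd_not_less)
  qed
  then show ?thesis
    using True by (simp add: coset_rep_eq_iff[OF p_dvd_q])
next
  case False
  have "[(x + a) mod (p * q) = x] (mod q) \<longleftrightarrow> [x + a = x] (mod q)"
    by (simp add: cong_def mod_mod_cancel)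
  also have "\<dots> \<longleftrightarrow> q dvd a"
    by (simp add: cong_add_lcancel_0_nat cong_0_iff)
  finally show ?thesis
    using False by (simp add: coset_rep_eq_iff[OF p_dvd_q])
qed

lemma zero_difference_coset_index_fun:
  assumes "bij_betw h (cosets_D (p * q) (gen_subgroup (p * q) (q + 1)))
      {0..<card (cosets_D (p * q) (gen_subgroup (p * q) (q + 1)))}"
  shows "zero_difference_fun (p * q) (coset_index_fun (p * q) (gen_subgroup (p * q) (q + 1)) h)
      (q + (q - q div p)) {0, p * q - q}"
proof -
  let ?f = "coset_index_fun (p * q) (gen_subgroup (p * q) (q + 1)) h"
  have "{x \<in> {0..<p * q}. ?f ((x + a) mod (p * q)) = ?f x} =
      {x \<in> {0..<p * q}. \<not> p dvd x \<and> q dvd a}"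
    if "0 < a" "a < p * q" for a
  proof (intro Collect_cong conj_cong refl)
    fix x assume "x \<in> {0..<p * q}"
    moreover have "0 < p * q"
      using that by linarith
    ultimately have "x < p * q" "(x + a) mod (p * q) < p * q"
      by auto
    then show "?f ((x + a) mod (p * q)) = ?f x \<longleftrightarrow> \<not> p dvd x \<and> q dvd a"
      using coset_index_fun_eq_iff[OF assms] coset_rep_shift_eq_iff[OF _ that] by simp
  qed
  moreover have "card {x \<in> {0..<p * q}. \<not> p dvd x} = p * q - q"
    using card_nonmultiples_below prime_gt_0_nat[OF prime_p] by simp
  ultimately show ?thesis
    unfolding zero_difference_fun_def
    using card_image_coset_index_fun[OF assms] card_image_coset_rep by auto
qed

end

theorem proposition3p8:
  fixes p k n :: nat and G :: "nat set" and h :: "nat set \<Rightarrow> nat"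
  assumes "prime p" and "k \<ge> 2" and "n = p ^ k"
    and "G = gen_subgroup n (p ^ (k - 1) + 1)"
    and "bij_betw h (cosets_D n G) {0..<card (cosets_D n G)}"
  shows "zero_difference_fun n (coset_index_fun n G h)
           (2 * p ^ (k - 1) - p ^ (k - 2)) {0, p ^ k - p ^ (k - 1)}"
proof -
  obtain j where k: "k = j + 2"
    using assms(2) le_Suc_ex by (metis add.commute)
  define q where "q = p ^ (k - 1)"
  have p_dvd_q: "p dvd q" and n_eq: "n = p * q" and q_div_p: "q div p = p ^ (k - 2)"
    using prime_gt_0_nat[OF assms(1)] by (simp_all add: q_def k assms(3))
  have "G = gen_subgroup (p * q) (q + 1)"
    using assms(4) by (simp add: n_eq q_def)
  then have "zero_difference_fun n (coset_index_fun n G h) (q + (q - q div p)) {0, n - q}"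
    using zero_difference_coset_index_fun[OF assms(1) p_dvd_q] assms(5) by (simp add: n_eq)
  moreover have "q + (q - q div p) = 2 * q - q div p"
    using div_le_dividend[of q p] by linarith
  ultimately show ?thesis
    by (simp only: q_div_p) (simp add: assms(3) q_def)
qed

end
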